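(* Let $S$ be a semiring satisfying the standing assumptions below. Every basis $\{\beta_1,\dots,\beta_n\}$ of $S^n$ consists of vectors each of which has exactly one nonzero entry, and that nonzero entry is a unit of $S$; that is, each $\beta_i$ is of the form $(0,\dots,0,a_i,0,\dots,0)$ with $a_i \in U(S)$.
   Context: A semiring $(S,+,\cdot)$ here means: $(S,+)$ is a commutative monoid with zero $0$, $(S,\cdot)$ is a commutative monoid with identity $1$, multiplication distributes over addition, and $0$ is absorbing. Standing assumptions on $S$: $S$ is additively idempotent ($a+a=a$), multiplicatively cancellative (for every nonzero $a$, $ba=ca$ implies $b=c$), and additively unit irreducible (if $a+b$ is a unit then $a$ or $b$ is a unit). $U(S)$ is the set of units of $S$. $S^n$ is the semimodule of all $1\times n$ matrices over $S$ (componentwise addition and scalar multiplication). A set $D$ is linearly independent if no $x\in D$ lies in the set of finite $S$-linear combinations of $D\setminus\{x\}$; a basis is a linearly independent spanning set. *)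

theory Defs
  imports "HOL-Analysis.Analysis"
begin

definition add_idempotent :: "('a::comm_semiring_1) itself \<Rightarrow> bool" where
  "add_idempotent _ \<longleftrightarrow> (\<forall>a::'a. a + a = a)"

definition mult_cancellative :: "('a::comm_semiring_1) itself \<Rightarrow> bool" where
  "mult_cancellative _ \<longleftrightarrow> (\<forall>a b c::'a. a \<noteq> 0 \<longrightarrow> b * a = c * a \<longrightarrow> b = c)"

definition is_unit_sr :: "'a::comm_semiring_1 \<Rightarrow> bool" where
  "is_unit_sr a \<longleftrightarrow> (\<exists>b. a * b = 1)"

definition add_unit_irreducible :: "('a::comm_semiring_1) itself \<Rightarrow> bool" where
  "add_unit_irreducible _ \<longleftrightarrow>
     (\<forall>a b::'a. is_unit_sr (a + b) \<longrightarrow> is_unit_sr a \<or> is_unit_sr b)"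

definition smult_vec :: "'a::comm_semiring_1 \<Rightarrow> 'a ^ 'n \<Rightarrow> 'a ^ 'n" where
  "smult_vec c v = (\<chi> i. c * v $ i)"

definition lin_comb :: "('a::comm_semiring_1 ^ 'n) set \<Rightarrow> ('a ^ 'n) set" where
  "lin_comb D = {\<Sum>v\<in>F. smult_vec (c v) v | F c. finite F \<and> F \<subseteq> D}"

definition lin_indep :: "('a::comm_semiring_1 ^ 'n) set \<Rightarrow> bool" where
  "lin_indep D \<longleftrightarrow> (\<forall>x\<in>D. x \<notin> lin_comb (D - {x}))"

definition is_basis :: "('a::comm_semiring_1 ^ 'n) set \<Rightarrow> bool" where
  "is_basis D \<longleftrightarrow> lin_indep D \<and> lin_comb D = UNIV"

end

theory Submission
  imports Defs
begin

text \<open>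
  Write each unit vector \<open>e\<^sub>i\<close> as a combination \<open>\<Sum> c\<^sub>v v\<close> of basis vectors. Its \<open>i\<close>-th entry \<open>1\<close>
  is a unit, so by additive unit irreducibility some summand \<open>c\<^sub>v v\<^sub>i\<close> is a unit; its other
  entries vanish, and since an additively idempotent semiring is zero-sum free, every
  \<open>c\<^sub>v v\<^sub>j\<close> with \<open>j \<noteq> i\<close> vanishes, whence \<open>v\<^sub>j = 0\<close> by cancellation. Thus the basis contains,
  for every \<open>i\<close>, a vector \<open>w\<^sub>i\<close> supported at \<open>i\<close> with a unit there. These \<open>w\<^sub>i\<close> already span
  \<open>S\<^sup>n\<close>, so by independence no other basis vector can exist.
\<close>

lemma add_idempotent_sum_eq_zero_iff:
  fixes f :: "'b \<Rightarrow> 'a::comm_semiring_1"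
  assumes "add_idempotent TYPE('a)" and "finite F"
  shows "sum f F = 0 \<longleftrightarrow> (\<forall>x\<in>F. f x = 0)"
proof -
  have zero_sum_free: "a + b = 0 \<longleftrightarrow> a = 0 \<and> b = 0" for a b :: 'a
  proof
    assume sum0: "a + b = 0"
    have "a = a + (a + b)"
      using sum0 by simp
    also have "\<dots> = (a + a) + b"
      by (simp add: add.assoc)
    also have "\<dots> = 0"
      using assms(1) sum0 by (simp add: add_idempotent_def)
    finally show "a = 0 \<and> b = 0"
      using sum0 by simp
  qed simp
  from assms(2) show ?thesis
    by (induction F rule: finite_induct) (simp_all add: zero_sum_free)
qed

lemma is_unit_sr_sumD:
  fixes f :: "'b \<Rightarrow> 'a::comm_semiring_1"
  assumes "add_unit_irreducible TYPE('a)" and "finite F" and "is_unit_sr (sum f F)"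
  shows "\<exists>x\<in>F. is_unit_sr (f x)"
  using assms(2,3)
proof (induction F rule: finite_induct)
  case empty
  then show ?case by (simp add: is_unit_sr_def)
next
  case (insert x F)
  then have "is_unit_sr (f x) \<or> is_unit_sr (sum f F)"
    using assms(1) by (simp add: add_unit_irreducible_def)
  with insert.IH show ?case by blast
qed

lemma is_unit_sr_multD:
  fixes a b :: "'a::comm_semiring_1"
  assumes "is_unit_sr (a * b)"
  shows "is_unit_sr a" and "is_unit_sr b"
  using assms unfolding is_unit_sr_def by (metis mult.assoc mult.commute)+

lemma is_unit_sr_nonzero: "is_unit_sr (a::'a::comm_semiring_1) \<Longrightarrow> a \<noteq> 0"
  by (auto simp: is_unit_sr_def)

lemma lin_comb_mono: "A \<subseteq> B \<Longrightarrow> lin_comb A \<subseteq> lin_comb B"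
  unfolding lin_comb_def by blast

lemma sum_smult_vec_in_lin_comb_image:
  assumes "finite I" and "inj_on w I"
  shows "(\<Sum>j\<in>I. smult_vec (d j) (w j)) \<in> lin_comb (w ` I)"
proof -
  have "(\<Sum>j\<in>I. smult_vec (d j) (w j)) = (\<Sum>v\<in>w ` I. smult_vec (d (the_inv_into I w v)) v)"
    using assms(2) by (simp add: sum.reindex the_inv_into_f_f)
  then show ?thesis
    unfolding lin_comb_def mem_Collect_eq using assms(1)
    by (intro exI[of _ "w ` I"] exI[of _ "\<lambda>v. d (the_inv_into I w v)"]) simp
qed

definition unit_monomial :: "'n \<Rightarrow> 'a::comm_semiring_1 ^ 'n \<Rightarrow> bool" where
  "unit_monomial i v \<longleftrightarrow> is_unit_sr (v $ i) \<and> (\<forall>j. j \<noteq> i \<longrightarrow> v $ j = 0)"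

lemma spanning_set_contains_unit_monomial:
  fixes D :: "('a::comm_semiring_1 ^ 'n) set"
  assumes "add_idempotent TYPE('a)" and "mult_cancellative TYPE('a)"
    and "add_unit_irreducible TYPE('a)" and "lin_comb D = UNIV"
  shows "\<exists>v\<in>D. unit_monomial i v"
proof -
  let ?e = "(\<chi> j. if j = i then 1 else 0) :: 'a ^ 'n"
  obtain F c where F: "finite F" "F \<subseteq> D" and e: "?e = (\<Sum>v\<in>F. smult_vec (c v) v)"
    using assms(4) unfolding lin_comb_def by blast
  have e_nth: "(\<Sum>v\<in>F. c v * v $ j) = (if j = i then 1 else 0)" for j
    using arg_cong[OF e, of "\<lambda>x. x $ j"] by (simp add: smult_vec_def)
  have "is_unit_sr (\<Sum>v\<in>F. c v * v $ i)"
    by (simp add: e_nth is_unit_sr_def)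
  then obtain v where v: "v \<in> F" "is_unit_sr (c v * v $ i)"
    using is_unit_sr_sumD[OF assms(3) F(1)] by blast
  have c_nonzero: "c v \<noteq> 0"
    using is_unit_sr_multD(1)[OF v(2)] by (rule is_unit_sr_nonzero)
  have "v $ j = 0" if "j \<noteq> i" for j
  proof -
    have "c v * v $ j = 0"
      using e_nth[of j] that v(1) add_idempotent_sum_eq_zero_iff[OF assms(1) F(1)] by auto
    then have "v $ j * c v = 0 * c v"
      by (simp add: mult.commute)
    with c_nonzero assms(2) show ?thesis
      unfolding mult_cancellative_def by blast
  qed
  with is_unit_sr_multD(2)[OF v(2)] v(1) F(2) show ?thesis
    unfolding unit_monomial_def by blast
qed

lemma unit_monomials_inj:
  assumes "\<And>i. unit_monomial i (w i)"
  shows "inj w"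
proof (rule injI)
  fix i j
  assume "w i = w j"
  moreover have "w i $ i \<noteq> 0"
    using assms[of i] is_unit_sr_nonzero unfolding unit_monomial_def by blast
  ultimately show "i = j"
    using assms[of j] unfolding unit_monomial_def by auto
qed

lemma unit_monomials_span:
  fixes w :: "'n \<Rightarrow> 'a::comm_semiring_1 ^ 'n"
  assumes "\<And>i. unit_monomial i (w i)"
  shows "\<beta> \<in> lin_comb (range w)"
proof -
  obtain u where u: "\<And>j. w j $ j * u j = 1"
    using assms unfolding unit_monomial_def is_unit_sr_def by metis
  have "\<beta> $ j * u j * w j $ k = (if j = k then \<beta> $ k else 0)" for j k
    using u[of k] assms[of j] unfolding unit_monomial_def
    by (auto simp: mult.assoc mult.commute[of "u k"])
  then have "(\<Sum>j\<in>UNIV. smult_vec (\<beta> $ j * u j) (w j)) = \<beta>"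
    by (simp add: vec_eq_iff smult_vec_def)
  then show ?thesis
    using sum_smult_vec_in_lin_comb_image[of UNIV w] unit_monomials_inj[OF assms]
    by (metis finite_class.finite_UNIV)
qed

theorem corollary2p5:
  fixes B :: "('a::comm_semiring_1 ^ 'n) set"
  assumes "add_idempotent TYPE('a)"
    and "mult_cancellative TYPE('a)"
    and "add_unit_irreducible TYPE('a)"
    and "is_basis B"
  shows "\<forall>\<beta>\<in>B. \<exists>i. \<beta> $ i \<noteq> 0 \<and> is_unit_sr (\<beta> $ i) \<and> (\<forall>j. j \<noteq> i \<longrightarrow> \<beta> $ j = 0)"
proof
  fix \<beta> assume "\<beta> \<in> B"
  obtain w where w_B: "\<And>i. w i \<in> B" and w_mono: "\<And>i. unit_monomial i (w i)"
    using spanning_set_contains_unit_monomial[OF assms(1-3)] assms(4)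
    unfolding is_basis_def by metis
  have "\<beta> \<in> range w"
  proof (rule ccontr)
    assume "\<beta> \<notin> range w"
    then have "lin_comb (range w) \<subseteq> lin_comb (B - {\<beta>})"
      using w_B by (intro lin_comb_mono) blast
    with unit_monomials_span[OF w_mono] \<open>\<beta> \<in> B\<close> assms(4) show False
      unfolding is_basis_def lin_indep_def by blast
  qed
  then obtain i where "unit_monomial i \<beta>"
    using w_mono by blast
  then show "\<exists>i. \<beta> $ i \<noteq> 0 \<and> is_unit_sr (\<beta> $ i) \<and> (\<forall>j. j \<noteq> i \<longrightarrow> \<beta> $ j = 0)"
    using is_unit_sr_nonzero unfolding unit_monomial_def by blast
qed

end
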